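(* Let $X$ be a primitive distance-regular graph of diameter $d\geq 2$ on $n$ vertices with degree $k$, and let $\alpha>0$. Suppose that for some $1\leq j\leq d-1$ we have $b_j\geq\alpha k$ and $c_{j+1}\geq\alpha k$. Then $D_{\min}(X)\geq \frac{\alpha}{d}n$.
   Context: A connected graph $X$ of diameter $d$ is distance-regular if there are integers $a_i,b_i,c_i$ ($0\le i\le d$) such that for all vertices $v,w$ with $\mathrm{dist}(v,w)=i$, $w$ has exactly $c_i$ neighbours at distance $i-1$, $a_i$ at distance $i$, $b_i$ at distance $i+1$ from $v$; $X$ is $k$-regular with $k=b_0$. It is primitive if for every $1\le i\le d$ the distance-$i$ graph (same vertices, $u\sim v$ iff $\mathrm{dist}(u,v)=i$) is connected. A vertex $x$ distinguishes $u,v$ if $\mathrm{dist}(x,u)\neq\mathrm{dist}(x,v)$; $D(u,v)$ is the number of vertices distinguishing $u,v$, and $D_{\min}(X)=\min_{u\neq v}D(u,v)$. *)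

theory Defs
  imports Complex_Main
begin

definition simple_graph :: "'a set \<Rightarrow> ('a \<Rightarrow> 'a \<Rightarrow> bool) \<Rightarrow> bool" where
  "simple_graph V E \<longleftrightarrow> finite V \<and> V \<noteq> {} \<and>
     (\<forall>u v. E u v \<longrightarrow> u \<in> V \<and> v \<in> V) \<and>
     (\<forall>u v. E u v \<longrightarrow> E v u) \<and> (\<forall>u. \<not> E u u)"

fun walk :: "('a \<Rightarrow> 'a \<Rightarrow> bool) \<Rightarrow> 'a list \<Rightarrow> bool" where
  "walk R [] = False"
| "walk R [x] = True"
| "walk R (x # y # xs) = (R x y \<and> walk R (y # xs))"

definition walk_betw :: "'a set \<Rightarrow> ('a \<Rightarrow> 'a \<Rightarrow> bool) \<Rightarrow> 'a \<Rightarrow> 'a \<Rightarrow> nat \<Rightarrow> bool" where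
  "walk_betw V R u v n \<longleftrightarrow>
     (\<exists>xs. walk R xs \<and> set xs \<subseteq> V \<and> hd xs = u \<and> last xs = v \<and> length xs = Suc n)"

definition connected_rel :: "'a set \<Rightarrow> ('a \<Rightarrow> 'a \<Rightarrow> bool) \<Rightarrow> bool" where
  "connected_rel V R \<longleftrightarrow> (\<forall>u\<in>V. \<forall>v\<in>V. \<exists>n. walk_betw V R u v n)"

definition gdist :: "'a set \<Rightarrow> ('a \<Rightarrow> 'a \<Rightarrow> bool) \<Rightarrow> 'a \<Rightarrow> 'a \<Rightarrow> nat" where
  "gdist V E u v = (LEAST n. walk_betw V E u v n)"

definition diameter :: "'a set \<Rightarrow> ('a \<Rightarrow> 'a \<Rightarrow> bool) \<Rightarrow> nat" where
  "diameter V E = Max {gdist V E u v | u v. u \<in> V \<and> v \<in> V}"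

text \<open>Distance-regular with intersection arrays a, b, c (indices 0..d);
  for dist(v,w) = i: c i neighbours of w at distance i-1 from v, a i at distance i,
  b i at distance i+1.  The degree is k = b 0.\<close>
definition distance_regular ::
  "'a set \<Rightarrow> ('a \<Rightarrow> 'a \<Rightarrow> bool) \<Rightarrow> (nat \<Rightarrow> nat) \<Rightarrow> (nat \<Rightarrow> nat) \<Rightarrow> (nat \<Rightarrow> nat) \<Rightarrow> bool" where
  "distance_regular V E a b c \<longleftrightarrow> simple_graph V E \<and> connected_rel V E \<and>
     (\<forall>v\<in>V. \<forall>w\<in>V.
        card {x \<in> V. E w x \<and> gdist V E v x + 1 = gdist V E v w} = c (gdist V E v w) \<and>
        card {x \<in> V. E w x \<and> gdist V E v x = gdist V E v w} = a (gdist V E v w) \<and>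
        card {x \<in> V. E w x \<and> gdist V E v x = gdist V E v w + 1} = b (gdist V E v w))"

definition distance_graph :: "'a set \<Rightarrow> ('a \<Rightarrow> 'a \<Rightarrow> bool) \<Rightarrow> nat \<Rightarrow> 'a \<Rightarrow> 'a \<Rightarrow> bool" where
  "distance_graph V E i u v \<longleftrightarrow> u \<in> V \<and> v \<in> V \<and> gdist V E u v = i"

definition primitive :: "'a set \<Rightarrow> ('a \<Rightarrow> 'a \<Rightarrow> bool) \<Rightarrow> bool" where
  "primitive V E \<longleftrightarrow>
     (\<forall>i. 1 \<le> i \<and> i \<le> diameter V E \<longrightarrow> connected_rel V (distance_graph V E i))"

definition distinguishing_number :: "'a set \<Rightarrow> ('a \<Rightarrow> 'a \<Rightarrow> bool) \<Rightarrow> 'a \<Rightarrow> 'a \<Rightarrow> nat" where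
  "distinguishing_number V E u v = card {x \<in> V. gdist V E x u \<noteq> gdist V E x v}"

definition D_min :: "'a set \<Rightarrow> ('a \<Rightarrow> 'a \<Rightarrow> bool) \<Rightarrow> nat" where
  "D_min V E = Min {distinguishing_number V E u v | u v. u \<in> V \<and> v \<in> V \<and> u \<noteq> v}"

end

theory Submission
  imports Defs
begin

text \<open>The numbers \<open>p u v s t\<close> of vertices at distance \<open>s\<close> from \<open>u\<close> and \<open>t\<close> from \<open>v\<close>
  satisfy a recurrence in \<open>s\<close>, obtained by counting the edges between two spheres, which
  determines them from \<open>\<delta> u v\<close> alone. Hence \<open>D u v = n - \<Sum>\<^sub>s p u v s s\<close> depends only on
  \<open>\<delta> u v\<close>, and \<open>D\<close> satisfies the triangle inequality.

  For adjacent \<open>u\<close>, \<open>v\<close> the recurrence gives \<open>k p u v s (s + 1) = k\<^sub>s b\<^sub>s\<close> and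
  \<open>k p u v (s + 1) s = k\<^sub>s\<^sub>+\<^sub>1 c\<^sub>s\<^sub>+\<^sub>1\<close>, where \<open>k = b\<^sub>0\<close> and \<open>k\<^sub>s = p u u s s\<close> is the size
  of a sphere of radius \<open>s\<close>. Counting the former vertices for \<open>s \<le> j\<close> and the latter
  for \<open>s \<ge> j\<close>, and using \<open>b\<^sub>s \<ge> b\<^sub>j \<ge> \<alpha>k\<close>, \<open>c\<^sub>s \<ge> c\<^sub>j\<^sub>+\<^sub>1 \<ge> \<alpha>k\<close>, one gets \<open>D u v \<ge> \<alpha>n\<close>.

  Finally, if \<open>\<delta> u v = i\<close>, every ball around \<open>u\<close> in the distance-\<open>i\<close> graph is a union of
  spheres around \<open>u\<close>, so by primitivity the ball of radius \<open>d\<close> is everything. A neighbour \<open>z\<close>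
  of \<open>u\<close> is thus reached in at most \<open>d\<close> steps, each changing \<open>D u \<cdot>\<close> by \<open>D u v\<close> at most,
  whence \<open>\<alpha>n \<le> D u z \<le> d D u v\<close>.\<close>

section \<open>Walks and balls of a relation\<close>

lemma walk_snoc: "ys \<noteq> [] \<Longrightarrow> walk R (ys @ [w]) \<longleftrightarrow> walk R ys \<and> R (last ys) w"
proof (induction ys)
  case (Cons x ys) then show ?case by (cases ys) auto
qed simp

lemma walk_betw_0: "walk_betw V R u v 0 \<longleftrightarrow> u \<in> V \<and> v = u"
proof
  assume "walk_betw V R u v 0"
  then obtain xs where "walk R xs" "set xs \<subseteq> V" "hd xs = u" "last xs = v" "length xs = 1"
    unfolding walk_betw_def by auto
  then show "u \<in> V \<and> v = u" by (cases xs) auto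
next
  assume "u \<in> V \<and> v = u"
  then show "walk_betw V R u v 0"
    unfolding walk_betw_def by (intro exI[of _ "[u]"]) auto
qed

lemma walk_betw_Suc:
  "walk_betw V R u w (Suc n) \<longleftrightarrow> (\<exists>v. walk_betw V R u v n \<and> R v w \<and> w \<in> V)"
proof
  assume "walk_betw V R u w (Suc n)"
  then obtain xs where xs: "walk R xs" "set xs \<subseteq> V" "hd xs = u" "last xs = w"
      "length xs = Suc (Suc n)"
    unfolding walk_betw_def by auto
  then have "xs \<noteq> []" by auto
  then obtain ys where ys: "xs = ys @ [w]" using xs(4)
    by (metis append_butlast_last_id)
  then have "ys \<noteq> []" using xs(5) by auto
  have "walk R ys \<and> R (last ys) w" using walk_snoc[OF \<open>ys \<noteq> []\<close>] xs(1) ys by simp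
  moreover have "walk_betw V R u (last ys) n" unfolding walk_betw_def
    using xs ys \<open>ys \<noteq> []\<close> calculation by (intro exI[of _ ys]) auto
  ultimately show "\<exists>v. walk_betw V R u v n \<and> R v w \<and> w \<in> V" using xs ys by auto
next
  assume "\<exists>v. walk_betw V R u v n \<and> R v w \<and> w \<in> V"
  then obtain ys where ys: "walk R ys" "set ys \<subseteq> V" "hd ys = u" "R (last ys) w"
      "length ys = Suc n" "w \<in> V"
    unfolding walk_betw_def by auto
  then have "ys \<noteq> []" by auto
  then show "walk_betw V R u w (Suc n)"
    unfolding walk_betw_def using ys walk_snoc[OF \<open>ys \<noteq> []\<close>]
    by (intro exI[of _ "ys @ [w]"]) auto
qed

lemma walk_betw_in_V: "walk_betw V R u v n \<Longrightarrow> u \<in> V \<and> v \<in> V"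
  by (induction n arbitrary: v) (auto simp: walk_betw_0 walk_betw_Suc)

lemma walk_betw_trans:
  "walk_betw V R u v m \<Longrightarrow> walk_betw V R v w n \<Longrightarrow> walk_betw V R u w (m + n)"
proof (induction n arbitrary: w)
  case 0 then show ?case by (simp add: walk_betw_0)
next
  case (Suc n) then show ?case by (auto simp: walk_betw_Suc)
qed

lemma walk_betw_edge: "R u v \<Longrightarrow> u \<in> V \<Longrightarrow> v \<in> V \<Longrightarrow> walk_betw V R u v 1"
  unfolding walk_betw_def by (intro exI[of _ "[u, v]"]) auto

lemma walk_betw_sym:
  assumes "\<And>x y. R x y \<Longrightarrow> R y x"
  shows "walk_betw V R u v n \<Longrightarrow> walk_betw V R v u n"
proof (induction n arbitrary: v)
  case 0 then show ?case by (simp add: walk_betw_0)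
next
  case (Suc n)
  then obtain x where x: "walk_betw V R u x n" "R x v" "v \<in> V" by (auto simp: walk_betw_Suc)
  have "walk_betw V R v x 1"
    using walk_betw_edge[of R v x V] assms[OF x(2)] x(3) walk_betw_in_V[OF x(1)] by blast
  from walk_betw_trans[OF this Suc.IH[OF x(1)]] show ?case by simp
qed

primrec walk_ball :: "'a set \<Rightarrow> ('a \<Rightarrow> 'a \<Rightarrow> bool) \<Rightarrow> 'a \<Rightarrow> nat \<Rightarrow> 'a set" where
  "walk_ball V R u 0 = {u}"
| "walk_ball V R u (Suc t) = walk_ball V R u t \<union> {w \<in> V. \<exists>y \<in> walk_ball V R u t. R y w}"

lemma walk_ball_mono: "t \<le> t' \<Longrightarrow> walk_ball V R u t \<subseteq> walk_ball V R u t'"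
  by (induction t' rule: dec_induct) auto

lemma walk_ball_subset: "u \<in> V \<Longrightarrow> walk_ball V R u t \<subseteq> V"
  by (induction t) auto

lemma walk_betw_in_walk_ball: "walk_betw V R u w n \<Longrightarrow> w \<in> walk_ball V R u n"
  by (induction n arbitrary: w) (auto simp: walk_betw_0 walk_betw_Suc)

lemma walk_ball_stable:
  assumes "walk_ball V R u (Suc t) = walk_ball V R u t"
  shows "walk_ball V R u (t + n) = walk_ball V R u t"
proof (induction n)
  case (Suc n)
  have "walk_ball V R u (t + Suc n) = walk_ball V R u (Suc (t + n))" by simp
  also have "\<dots> = walk_ball V R u (Suc t)" using Suc by (simp only: walk_ball.simps)
  finally show ?case using assms by simp
qed simp

lemma connected_walk_ball_stable:
  assumes "connected_rel V R" "u \<in> V" "walk_ball V R u (Suc t) = walk_ball V R u t"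
  shows "walk_ball V R u t = V"
proof
  show "V \<subseteq> walk_ball V R u t"
  proof
    fix w assume "w \<in> V"
    then obtain n where "walk_betw V R u w n"
      using assms(1,2) unfolding connected_rel_def by blast
    then have "w \<in> walk_ball V R u (t + n)"
      using walk_betw_in_walk_ball walk_ball_mono[of n "t + n" V R u] by (meson le_add2 subsetD)
    then show "w \<in> walk_ball V R u t"
      using walk_ball_stable[OF assms(3)] by simp
  qed
qed (rule walk_ball_subset[OF assms(2)])

text \<open>If every ball around \<open>u\<close> is a union of level sets of \<open>f\<close>, each growth step of
  the ball meets a new level; with at most \<open>d + 1\<close> levels the ball of radius \<open>d\<close> is
  therefore all of \<open>V\<close>.\<close>
lemma walk_ball_eq_V_if_saturated:
  fixes f :: "'a \<Rightarrow> nat"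
  assumes conn: "connected_rel V R" and u: "u \<in> V" and levels: "f ` V \<subseteq> {..d}"
    and saturated: "\<And>t w w'. w \<in> walk_ball V R u t \<Longrightarrow> w' \<in> V \<Longrightarrow> f w' = f w
        \<Longrightarrow> w' \<in> walk_ball V R u t"
  shows "walk_ball V R u d = V"
proof -
  let ?B = "walk_ball V R u"
  have fin: "finite (f ` ?B t)" for t
    using image_mono[OF walk_ball_subset[OF u]] levels by (rule finite_subset[OF subset_trans]) simp
  have grow: "?B t = V \<or> Suc t \<le> card (f ` ?B t)" for t
  proof (induction t)
    case (Suc t)
    show ?case
    proof (cases "?B (Suc t) = ?B t")
      case True
      then show ?thesis using connected_walk_ball_stable[OF conn u True] by simp
    next
      case False
      then obtain w where w: "w \<in> ?B (Suc t)" "w \<notin> ?B t"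
        using walk_ball_mono[of t "Suc t" V R u] by auto
      then have "w \<in> V" using walk_ball_subset[OF u] by blast
      then have "f w \<notin> f ` ?B t" using saturated w(2) by (metis imageE)
      moreover have "f ` ?B t \<subseteq> f ` ?B (Suc t)"
        using walk_ball_mono[of t "Suc t" V R u] by (intro image_mono) simp
      ultimately have "f ` ?B t \<subset> f ` ?B (Suc t)"
        using w(1) by blast
      then have "card (f ` ?B t) < card (f ` ?B (Suc t))"
        by (rule psubset_card_mono[OF fin])
      moreover have "?B t \<noteq> V"
        using False walk_ball_mono[of t "Suc t" V R u] walk_ball_subset[OF u, of R "Suc t"]
        by (metis le_SucI order_refl subset_antisym)
      ultimately show ?thesis using Suc.IH by (simp del: walk_ball.simps)
    qed
  qed simp
  show ?thesis
  proof (rule ccontr)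
    assume "?B d \<noteq> V"
    then have "card {..d} \<le> card (f ` ?B d)" using grow[of d] by simp
    moreover have sub: "f ` ?B d \<subseteq> {..d}" using levels walk_ball_subset[OF u] by blast
    ultimately have "card (f ` ?B d) = card {..d}"
      using card_mono[OF finite_atMost sub] by simp
    then have "f ` ?B d = {..d}" by (rule card_subset_eq[OF finite_atMost sub])
    have "w \<in> ?B d" if "w \<in> V" for w
    proof -
      have "f w \<in> f ` ?B d" using \<open>f ` ?B d = {..d}\<close> levels that by blast
      then obtain w0 where "w0 \<in> ?B d" "f w = f w0" by blast
      then show ?thesis using saturated that by blast
    qed
    then show False using \<open>?B d \<noteq> V\<close> walk_ball_subset[OF u] by blast
  qed
qed

lemma sum_if_const: "finite A \<Longrightarrow> (\<Sum>y \<in> A. if Q y then k else 0) = k * card {y \<in> A. Q y}"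
  by (simp add: sum.inter_filter[symmetric])

lemma card_filter_eq_sum: "finite A \<Longrightarrow> card {y \<in> A. Q y} = (\<Sum>y \<in> A. if Q y then 1 else 0)"
  using sum_if_const[of A Q 1] by simp

section \<open>Distances in a distance-regular graph\<close>

locale distance_regular_graph =
  fixes V :: "'a set" and E :: "'a \<Rightarrow> 'a \<Rightarrow> bool" and a b c :: "nat \<Rightarrow> nat"
  assumes distance_regular: "distance_regular V E a b c"
begin

abbreviation \<delta> :: "'a \<Rightarrow> 'a \<Rightarrow> nat" where "\<delta> \<equiv> gdist V E"

abbreviation D :: "'a \<Rightarrow> 'a \<Rightarrow> nat" where "D \<equiv> distinguishing_number V E"

abbreviation diam :: nat where "diam \<equiv> diameter V E"

lemma simple: "simple_graph V E"
  using distance_regular unfolding distance_regular_def by blast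

lemma finite_V: "finite V"
  using simple unfolding simple_graph_def by blast

lemma V_nonempty: "V \<noteq> {}"
  using simple unfolding simple_graph_def by blast

lemma edge_in_V: "E u v \<Longrightarrow> u \<in> V \<and> v \<in> V"
  using simple unfolding simple_graph_def by blast

lemma edge_sym: "E u v \<Longrightarrow> E v u"
  using simple unfolding simple_graph_def by blast

lemma edge_irrefl: "\<not> E u u"
  using simple unfolding simple_graph_def by blast

lemma connected: "connected_rel V E"
  using distance_regular unfolding distance_regular_def by blast

lemma intersection_numbers:
  assumes "v \<in> V" "w \<in> V"
  shows "card {x \<in> V. E w x \<and> \<delta> v x + 1 = \<delta> v w} = c (\<delta> v w)"
    and "card {x \<in> V. E w x \<and> \<delta> v x = \<delta> v w} = a (\<delta> v w)"
    and "card {x \<in> V. E w x \<and> \<delta> v x = \<delta> v w + 1} = b (\<delta> v w)"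
  using distance_regular assms unfolding distance_regular_def by blast+

lemma gdist_walk: "u \<in> V \<Longrightarrow> v \<in> V \<Longrightarrow> walk_betw V E u v (\<delta> u v)"
  using connected unfolding gdist_def connected_rel_def by (metis LeastI_ex)

lemma gdist_le: "walk_betw V E u v n \<Longrightarrow> \<delta> u v \<le> n"
  unfolding gdist_def by (rule Least_le)

lemma gdist_self: "u \<in> V \<Longrightarrow> \<delta> u u = 0"
  using gdist_le[of u u 0] by (simp add: walk_betw_0)

lemma gdist_eq_0_iff: "u \<in> V \<Longrightarrow> v \<in> V \<Longrightarrow> \<delta> u v = 0 \<longleftrightarrow> v = u"
  using gdist_walk[of u v] gdist_self by (auto simp: walk_betw_0)

lemma gdist_commute:
  assumes "u \<in> V" "v \<in> V"
  shows "\<delta> u v = \<delta> v u"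
proof -
  have "\<delta> v u \<le> \<delta> u v" using gdist_le walk_betw_sym[OF edge_sym gdist_walk[OF assms]] .
  moreover have "\<delta> u v \<le> \<delta> v u" using gdist_le walk_betw_sym[OF edge_sym gdist_walk[OF assms(2,1)]] .
  ultimately show ?thesis by simp
qed

lemma gdist_triangle: "u \<in> V \<Longrightarrow> v \<in> V \<Longrightarrow> w \<in> V \<Longrightarrow> \<delta> u w \<le> \<delta> u v + \<delta> v w"
  using gdist_le[OF walk_betw_trans[OF gdist_walk gdist_walk]] by blast

lemma gdist_edge:
  assumes "E u v"
  shows "\<delta> u v = 1"
proof -
  have "\<delta> u v \<le> 1" using gdist_le[OF walk_betw_edge[of E u v V, OF assms]] edge_in_V[OF assms] by blast
  moreover have "\<delta> u v \<noteq> 0" using gdist_eq_0_iff edge_in_V[OF assms] edge_irrefl assms by blast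
  ultimately show ?thesis by simp
qed

lemma gdist_edge_le: "u \<in> V \<Longrightarrow> E x y \<Longrightarrow> \<delta> u y \<le> \<delta> u x + 1"
  using gdist_triangle[of u x y] gdist_edge[of x y] edge_in_V[of x y] by simp

lemma gdist_1_imp_edge: "u \<in> V \<Longrightarrow> v \<in> V \<Longrightarrow> \<delta> u v = 1 \<Longrightarrow> E u v"
  using gdist_walk[of u v] by (auto simp: walk_betw_Suc walk_betw_0)

lemma gdist_Suc_predecessor:
  assumes "u \<in> V" "x \<in> V" "\<delta> u x = Suc s"
  obtains y where "y \<in> V" "E y x" "\<delta> u y = s"
proof -
  obtain y where y: "walk_betw V E u y s" "E y x"
    using gdist_walk[of u x] assms by (auto simp: walk_betw_Suc)
  then have "\<delta> u y = s"
    using gdist_le[OF y(1)] gdist_edge_le[OF assms(1) y(2)] assms(3) by simp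
  then show thesis using that y edge_in_V by blast
qed

lemma gdist_intermediate:
  assumes "u \<in> V" "x \<in> V" "l \<le> \<delta> u x"
  shows "\<exists>y \<in> V. \<delta> u y = l"
proof -
  have "\<delta> u x = m \<Longrightarrow> x \<in> V \<Longrightarrow> l \<le> m \<Longrightarrow> \<exists>y \<in> V. \<delta> u y = l" for m
  proof (induction m arbitrary: x)
    case (Suc m)
    show ?case
    proof (cases "l = Suc m")
      case False
      obtain y where "y \<in> V" "\<delta> u y = m"
        using gdist_Suc_predecessor[OF assms(1) Suc.prems(2,1)] by blast
      then show ?thesis using Suc.IH Suc.prems(3) False by simp
    qed (use Suc.prems in blast)
  qed blast
  then show ?thesis using assms(2,3) by blast
qed

lemma finite_gdists: "finite {\<delta> u v | u v. u \<in> V \<and> v \<in> V}"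
proof -
  have "{\<delta> u v | u v. u \<in> V \<and> v \<in> V} = (\<lambda>(u, v). \<delta> u v) ` (V \<times> V)" by auto
  then show ?thesis using finite_V by simp
qed

lemma gdist_le_diameter: "u \<in> V \<Longrightarrow> v \<in> V \<Longrightarrow> \<delta> u v \<le> diam"
  unfolding diameter_def by (rule Max_ge[OF finite_gdists]) blast

lemma gdist_attained:
  assumes "m \<le> diam"
  obtains u x where "u \<in> V" "x \<in> V" "\<delta> u x = m"
proof -
  have "{\<delta> u v | u v. u \<in> V \<and> v \<in> V} \<noteq> {}" using V_nonempty by blast
  then have "diam \<in> {\<delta> u v | u v. u \<in> V \<and> v \<in> V}"
    unfolding diameter_def by (rule Max_in[OF finite_gdists])
  then obtain u x where ux: "u \<in> V" "x \<in> V" "diam = \<delta> u x" by blast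
  then obtain y where "y \<in> V" "\<delta> u y = m" using gdist_intermediate[OF ux(1,2)] assms by force
  then show thesis using that ux(1) by blast
qed

lemma c_pos:
  assumes "u \<in> V" "x \<in> V" "\<delta> u x = Suc s"
  shows "0 < c (Suc s)"
proof -
  obtain y where "y \<in> V" "E y x" "\<delta> u y = s"
    using gdist_Suc_predecessor[OF assms] .
  then have "y \<in> {y \<in> V. E x y \<and> \<delta> u y + 1 = \<delta> u x}" using assms(3) edge_sym by simp
  then have "0 < card {y \<in> V. E x y \<and> \<delta> u y + 1 = \<delta> u x}"
    using finite_V by (auto simp: card_gt_0_iff)
  then show ?thesis using intersection_numbers(1)[OF assms(1,2)] assms(3) by simp
qed

lemma sphere_empty_if_c_zero:
  "u \<in> V \<Longrightarrow> c (Suc s) = 0 \<Longrightarrow> {x \<in> V. \<delta> u x = Suc s \<and> Q x} = {}"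
  using c_pos[of u _ s] by auto

lemma degree_pos:
  assumes "1 \<le> diam"
  shows "0 < b 0"
proof -
  obtain u x where ux: "u \<in> V" "x \<in> V" "\<delta> u x = 1"
    using gdist_attained[OF assms] by blast
  then have "x \<in> {y \<in> V. E u y \<and> \<delta> u y = \<delta> u u + 1}"
    using gdist_1_imp_edge gdist_self by simp
  then have "0 < card {y \<in> V. E u y \<and> \<delta> u y = \<delta> u u + 1}"
    using finite_V by (auto simp: card_gt_0_iff)
  then show ?thesis using intersection_numbers(3)[OF ux(1,1)] gdist_self[OF ux(1)] by simp
qed

section \<open>Intersection numbers\<close>

lemma neighbours_at_gdist:
  assumes "v \<in> V" "x \<in> V"
  shows "card {y \<in> V. E x y \<and> \<delta> v y = t} =
    (if \<delta> v x = t + 1 then c (t + 1) else 0) + (if \<delta> v x = t then a t else 0)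
    + (if \<delta> v x + 1 = t then b (\<delta> v x) else 0)"
proof -
  note cab = intersection_numbers[OF assms]
  have near: "E x y \<Longrightarrow> \<delta> v y \<le> \<delta> v x + 1 \<and> \<delta> v x \<le> \<delta> v y + 1" for y
    using gdist_edge_le[OF assms(1)] edge_sym by blast
  consider "\<delta> v x = t + 1" | "\<delta> v x = t" | "\<delta> v x + 1 = t"
    | "\<delta> v x \<noteq> t + 1 \<and> \<delta> v x \<noteq> t \<and> \<delta> v x + 1 \<noteq> t" by blast
  then show ?thesis
  proof cases
    case 1
    then have "{y \<in> V. E x y \<and> \<delta> v y = t} = {y \<in> V. E x y \<and> \<delta> v y + 1 = \<delta> v x}" by auto
    then show ?thesis using cab 1 by simp
  next
    case 2
    then have "{y \<in> V. E x y \<and> \<delta> v y = t} = {y \<in> V. E x y \<and> \<delta> v y = \<delta> v x}" by auto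
    then show ?thesis using cab 2 by simp
  next
    case 3
    then have "{y \<in> V. E x y \<and> \<delta> v y = t} = {y \<in> V. E x y \<and> \<delta> v y = \<delta> v x + 1}" by auto
    then show ?thesis using cab 3 by simp
  next
    case 4
    then have empty: "{y \<in> V. E x y \<and> \<delta> v y = t} = {}" using near by fastforce
    show ?thesis unfolding empty using 4 by simp
  qed
qed

definition p :: "'a \<Rightarrow> 'a \<Rightarrow> nat \<Rightarrow> nat \<Rightarrow> nat" where
  "p u v s t = card {x \<in> V. \<delta> u x = s \<and> \<delta> v x = t}"

lemma p_commute: "p v u t s = p u v s t"
  unfolding p_def by (rule arg_cong[where f = card]) auto

lemma p_0:
  assumes "u \<in> V" "v \<in> V"
  shows "p u v 0 t = (if \<delta> u v = t then 1 else 0)"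
proof -
  have "{x \<in> V. \<delta> u x = 0 \<and> \<delta> v x = t} = (if \<delta> v u = t then {u} else {})"
    using gdist_eq_0_iff[OF assms(1)] gdist_self[OF assms(1)] assms(1) by auto
  then show ?thesis unfolding p_def using gdist_commute[OF assms] by simp
qed

lemma sum_card_edges_commute:
  "(\<Sum>x \<in> {x \<in> V. Q x}. card {y \<in> V. E x y \<and> R y}) =
   (\<Sum>y \<in> {y \<in> V. R y}. card {x \<in> V. E y x \<and> Q x})"
proof -
  have "(\<Sum>x \<in> {x \<in> V. Q x}. card {y \<in> V. E x y \<and> R y}) =
      (\<Sum>x \<in> V. if Q x then card {y \<in> V. E x y \<and> R y} else 0)"
    using finite_V by (simp add: sum.inter_filter)
  also have "\<dots> = (\<Sum>x \<in> V. \<Sum>y \<in> V. if Q x \<and> E x y \<and> R y then 1 else 0)"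
    using finite_V by (intro sum.cong) (auto simp: card_filter_eq_sum)
  also have "\<dots> = (\<Sum>y \<in> V. \<Sum>x \<in> V. if Q x \<and> E x y \<and> R y then 1 else 0)"
    by (rule sum.swap)
  also have "\<dots> = (\<Sum>y \<in> V. if R y then card {x \<in> V. E y x \<and> Q x} else 0)"
    using finite_V by (intro sum.cong) (auto simp: card_filter_eq_sum edge_sym intro!: sum.cong)
  also have "\<dots> = (\<Sum>y \<in> {y \<in> V. R y}. card {x \<in> V. E y x \<and> Q x})"
    using finite_V by (simp add: sum.inter_filter)
  finally show ?thesis .
qed

lemma sphere_edge_count:
  assumes "u \<in> V" "v \<in> V"
  shows "(\<Sum>x \<in> {x \<in> V. \<delta> u x = s}. card {y \<in> V. E x y \<and> \<delta> v y = t}) =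
    c (t + 1) * p u v s (t + 1) + a t * p u v s t + (if t = 0 then 0 else b (t - 1) * p u v s (t - 1))"
proof -
  let ?S = "{x \<in> V. \<delta> u x = s}"
  have fin: "finite ?S" using finite_V by simp
  have level: "(\<Sum>x \<in> ?S. if \<delta> v x = r then k else 0) = k * p u v s r" for r k
  proof -
    have "{x \<in> ?S. \<delta> v x = r} = {x \<in> V. \<delta> u x = s \<and> \<delta> v x = r}" by auto
    then show ?thesis unfolding p_def sum_if_const[OF fin, of "\<lambda>x. \<delta> v x = r" k] by simp
  qed
  have "(\<Sum>x \<in> ?S. card {y \<in> V. E x y \<and> \<delta> v y = t}) =
      (\<Sum>x \<in> ?S. if \<delta> v x = t + 1 then c (t + 1) else 0) + (\<Sum>x \<in> ?S. if \<delta> v x = t then a t else 0)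
      + (\<Sum>x \<in> ?S. if \<delta> v x + 1 = t then b (\<delta> v x) else 0)"
    using neighbours_at_gdist[OF assms(2)] by (simp add: sum.distrib)
  also have "(\<Sum>x \<in> ?S. if \<delta> v x + 1 = t then b (\<delta> v x) else 0) =
      (if t = 0 then 0 else b (t - 1) * p u v s (t - 1))"
  proof (cases t)
    case (Suc t')
    then have "(\<Sum>x \<in> ?S. if \<delta> v x + 1 = t then b (\<delta> v x) else 0) =
        (\<Sum>x \<in> ?S. if \<delta> v x = t' then b t' else 0)"
      by (intro sum.cong) auto
    then show ?thesis using Suc level by simp
  qed simp
  finally show ?thesis using level by simp
qed

text \<open>Counting the edges between the sphere of radius \<open>s\<close> around \<open>u\<close> and the sphere of
  radius \<open>t\<close> around \<open>v\<close> from both sides.\<close>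
lemma p_recurrence:
  assumes "u \<in> V" "v \<in> V"
  shows "c (s + 1) * p u v (s + 1) t + a s * p u v s t
      + (if s = 0 then 0 else b (s - 1) * p u v (s - 1) t) =
    c (t + 1) * p u v s (t + 1) + a t * p u v s t
      + (if t = 0 then 0 else b (t - 1) * p u v s (t - 1))"
  using sphere_edge_count[OF assms, where s = s and t = t]
    sphere_edge_count[OF assms(2,1), where s = t and t = s]
    sum_card_edges_commute[of "\<lambda>x. \<delta> u x = s" "\<lambda>y. \<delta> v y = t"]
  by (simp add: p_commute)

lemma p_eq_if_gdist_eq:
  assumes "u \<in> V" "v \<in> V" "u' \<in> V" "v' \<in> V" "\<delta> u v = \<delta> u' v'"
  shows "p u v s t = p u' v' s t"
proof (induction s arbitrary: t rule: less_induct)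
  case (less s)
  show ?case
  proof (cases s)
    case 0
    then show ?thesis using p_0 assms by simp
  next
    case (Suc r)
    show ?thesis
    proof (cases "c (Suc r) = 0")
      case True
      have "{x \<in> V. \<delta> u x = Suc r \<and> \<delta> v x = t} = {}"
        by (rule sphere_empty_if_c_zero[OF assms(1) True])
      moreover have "{x \<in> V. \<delta> u' x = Suc r \<and> \<delta> v' x = t} = {}"
        by (rule sphere_empty_if_c_zero[OF assms(3) True])
      ultimately show ?thesis unfolding p_def Suc by (simp only:)
    next
      case False
      have below: "p u v r t' = p u' v' r t'" "p u v (r - 1) t' = p u' v' (r - 1) t'" for t'
        using less Suc by auto
      have "c (r + 1) * p u v (r + 1) t = c (r + 1) * p u' v' (r + 1) t"
        using p_recurrence[OF assms(1,2), where s = r and t = t]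
          p_recurrence[OF assms(3,4), where s = r and t = t]
        unfolding below by linarith
      then show ?thesis using False Suc by simp
    qed
  qed
qed

section \<open>Distinguishing numbers\<close>

lemma distinguishing_number_eq:
  assumes "u \<in> V" "v \<in> V"
  shows "D u v = card {x \<in> V. \<delta> u x \<noteq> \<delta> v x}"
  unfolding distinguishing_number_def
  by (rule arg_cong[where f = card]) (auto simp: gdist_commute assms)

lemma card_eq_sum_spheres:
  assumes "u \<in> V"
  shows "card {x \<in> V. Q x} = (\<Sum>s \<le> diam. card {x \<in> V. \<delta> u x = s \<and> Q x})"
proof -
  have "card {x \<in> V. Q x} = card (\<Union>s \<le> diam. {x \<in> V. \<delta> u x = s \<and> Q x})"
    using gdist_le_diameter[OF assms] by (intro arg_cong[where f = card]) auto
  also have "\<dots> = (\<Sum>s \<le> diam. card {x \<in> V. \<delta> u x = s \<and> Q x})"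
    using finite_V by (intro card_UN_disjoint) auto
  finally show ?thesis .
qed

lemma distinguishing_number_plus_sum_p:
  assumes "u \<in> V" "v \<in> V"
  shows "D u v + (\<Sum>s \<le> diam. p u v s s) = card V"
proof -
  have "(\<Sum>s \<le> diam. p u v s s) = card {x \<in> V. \<delta> u x = \<delta> v x}"
    unfolding card_eq_sum_spheres[OF assms(1), of "\<lambda>x. \<delta> u x = \<delta> v x"] p_def
    by (intro sum.cong refl arg_cong[where f = card]) auto
  moreover have "card V = card ({x \<in> V. \<delta> u x \<noteq> \<delta> v x} \<union> {x \<in> V. \<delta> u x = \<delta> v x})"
    by (rule arg_cong[where f = card]) auto
  then have "card V = card {x \<in> V. \<delta> u x \<noteq> \<delta> v x} + card {x \<in> V. \<delta> u x = \<delta> v x}"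
    using finite_V by (simp add: card_Un_disjoint disjoint_iff)
  ultimately show ?thesis using distinguishing_number_eq[OF assms] by simp
qed

lemma distinguishing_number_eq_if_gdist_eq:
  assumes "u \<in> V" "v \<in> V" "u' \<in> V" "v' \<in> V" "\<delta> u v = \<delta> u' v'"
  shows "D u v = D u' v'"
  using distinguishing_number_plus_sum_p[OF assms(1,2)] distinguishing_number_plus_sum_p[OF assms(3,4)]
    p_eq_if_gdist_eq[OF assms] by simp

lemma distinguishing_number_triangle:
  assumes "u \<in> V" "v \<in> V" "w \<in> V"
  shows "D u w \<le> D u v + D v w"
proof -
  have "{x \<in> V. \<delta> u x \<noteq> \<delta> w x} \<subseteq> {x \<in> V. \<delta> u x \<noteq> \<delta> v x} \<union> {x \<in> V. \<delta> v x \<noteq> \<delta> w x}"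
    by auto
  then have "card {x \<in> V. \<delta> u x \<noteq> \<delta> w x} \<le>
      card ({x \<in> V. \<delta> u x \<noteq> \<delta> v x} \<union> {x \<in> V. \<delta> v x \<noteq> \<delta> w x})"
    using finite_V by (intro card_mono) auto
  also have "\<dots> \<le> card {x \<in> V. \<delta> u x \<noteq> \<delta> v x} + card {x \<in> V. \<delta> v x \<noteq> \<delta> w x}"
    by (rule card_Un_le)
  finally show ?thesis using distinguishing_number_eq assms by simp
qed

section \<open>Adjacent vertices\<close>

lemma p_self_off_diagonal:
  assumes "s \<noteq> t"
  shows "p u u s t = 0"
proof -
  have empty: "{x \<in> V. \<delta> u x = s \<and> \<delta> u x = t} = {}" using assms by auto
  show ?thesis unfolding p_def empty by simp
qed

lemma p_edge_far:
  assumes "u \<in> V" "v \<in> V" "\<delta> u v = 1" "s + 1 < t \<or> t + 1 < s"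
  shows "p u v s t = 0"
proof -
  have empty: "{x \<in> V. \<delta> u x = s \<and> \<delta> v x = t} = {}"
  proof (rule equals0I)
    fix x assume x: "x \<in> {x \<in> V. \<delta> u x = s \<and> \<delta> v x = t}"
    then have "\<delta> v x \<le> \<delta> v u + \<delta> u x" "\<delta> u x \<le> \<delta> u v + \<delta> v x"
      using gdist_triangle assms(1,2) by blast+
    then show False using x assms(3,4) gdist_commute[OF assms(1,2)] by auto
  qed
  show ?thesis unfolding p_def empty by simp
qed

lemma sphere_card_recurrence:
  assumes "u \<in> V"
  shows "c (s + 1) * p u u (s + 1) (s + 1) = b s * p u u s s"
  using p_recurrence[OF assms assms, where s = s and t = "s + 1"]
  by (cases s) (simp_all add: p_self_off_diagonal)

lemma p_edge_up:
  assumes "u \<in> V" "v \<in> V" "\<delta> u v = 1"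
  shows "b 0 * p u v s (s + 1) = p u u s s * b s"
proof (induction s)
  case 0
  then show ?case using p_0[OF assms(1,2)] p_0[OF assms(1,1)] assms(3) gdist_self[OF assms(1)] by simp
next
  case (Suc s)
  show ?case
  proof (cases "c (s + 1) = 0")
    case True
    then have "c (Suc s) = 0" by simp
    then have "{x \<in> V. \<delta> u x = Suc s \<and> \<delta> v x = Suc s + 1} = {}"
      "{x \<in> V. \<delta> u x = Suc s \<and> \<delta> u x = Suc s} = {}"
      by (rule sphere_empty_if_c_zero[OF assms(1)])+
    then show ?thesis unfolding p_def by (simp only: card.empty mult_0_right mult_0)
  next
    case False
    have step: "c (s + 1) * p u v (s + 1) (s + 2) = b (s + 1) * p u v s (s + 1)"
      using p_recurrence[OF assms(1,2), where s = s and t = "s + 2"] p_edge_far[OF assms]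
      by (cases s) (simp_all add: numeral_eq_Suc)
    have "c (s + 1) * (b 0 * p u v (s + 1) (s + 2)) = b (s + 1) * (p u u s s * b s)"
      using step Suc.IH by (metis mult.left_commute)
    also have "\<dots> = c (s + 1) * (p u u (s + 1) (s + 1) * b (s + 1))"
      using sphere_card_recurrence[OF assms(1), of s] by (simp add: ac_simps)
    finally show ?thesis using False by (simp add: numeral_eq_Suc)
  qed
qed

lemma p_edge_down:
  assumes "u \<in> V" "v \<in> V" "\<delta> u v = 1"
  shows "b 0 * p u v (s + 1) s = p u u (s + 1) (s + 1) * c (s + 1)"
proof -
  have "p u v (s + 1) s = p u v s (s + 1)"
    using p_commute[of v u] p_eq_if_gdist_eq[OF assms(2,1,1,2)] assms gdist_commute by simp
  then show ?thesis
    using p_edge_up[OF assms, of s] sphere_card_recurrence[OF assms(1), of s] by (simp add: ac_simps)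
qed

text \<open>Step from \<open>u\<close> to a neighbour \<open>u'\<close> of \<open>u\<close> on a geodesic towards \<open>x\<close>: every neighbour of
  \<open>x\<close> farther from \<open>u\<close> than \<open>x\<close> is also farther from \<open>u'\<close>, and every neighbour of \<open>x\<close>
  closer to \<open>u'\<close> is also closer to \<open>u\<close>.\<close>
lemma b_Suc_le_and_c_le_Suc:
  assumes "Suc s \<le> diam"
  shows "b (Suc s) \<le> b s" and "c s \<le> c (Suc s)"
proof -
  obtain u x where ux: "u \<in> V" "x \<in> V" "\<delta> u x = Suc s"
    using gdist_attained[OF assms] .
  then obtain u' where u': "u' \<in> V" "E u' u" "\<delta> x u' = s"
    using gdist_Suc_predecessor[OF ux(2,1)] gdist_commute by metis
  have xu': "\<delta> u' x = s" using u' ux gdist_commute by simp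
  have uu': "\<delta> u u' = 1" using gdist_edge[OF edge_sym[OF u'(2)]] .
  have "{y \<in> V. E x y \<and> \<delta> u y = \<delta> u x + 1} \<subseteq> {y \<in> V. E x y \<and> \<delta> u' y = \<delta> u' x + 1}"
  proof safe
    fix y assume y: "y \<in> V" "E x y" "\<delta> u y = \<delta> u x + 1"
    have "\<delta> u y \<le> \<delta> u u' + \<delta> u' y" using gdist_triangle ux u' y by blast
    moreover have "\<delta> u' y \<le> \<delta> u' x + 1" using gdist_edge_le[OF u'(1) y(2)] .
    ultimately show "\<delta> u' y = \<delta> u' x + 1" using y ux(3) xu' uu' by simp
  qed
  then have "card {y \<in> V. E x y \<and> \<delta> u y = \<delta> u x + 1} \<le>
      card {y \<in> V. E x y \<and> \<delta> u' y = \<delta> u' x + 1}"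
    using finite_V by (intro card_mono) auto
  then show "b (Suc s) \<le> b s"
    using intersection_numbers(3)[OF ux(1,2)] intersection_numbers(3)[OF u'(1) ux(2)] ux(3) xu'
    by simp
  have "{y \<in> V. E x y \<and> \<delta> u' y + 1 = \<delta> u' x} \<subseteq> {y \<in> V. E x y \<and> \<delta> u y + 1 = \<delta> u x}"
  proof safe
    fix y assume y: "y \<in> V" "E x y" "\<delta> u' y + 1 = \<delta> u' x"
    have "\<delta> u y \<le> \<delta> u u' + \<delta> u' y" using gdist_triangle ux u' y by blast
    moreover have "\<delta> u x \<le> \<delta> u y + 1" using gdist_edge_le[OF ux(1) edge_sym[OF y(2)]] .
    ultimately show "\<delta> u y + 1 = \<delta> u x" using y ux(3) xu' uu' by simp
  qed
  then have "card {y \<in> V. E x y \<and> \<delta> u' y + 1 = \<delta> u' x} \<le>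
      card {y \<in> V. E x y \<and> \<delta> u y + 1 = \<delta> u x}"
    using finite_V by (intro card_mono) auto
  then show "c s \<le> c (Suc s)"
    using intersection_numbers(1)[OF ux(1,2)] intersection_numbers(1)[OF u'(1) ux(2)] ux(3) xu'
    by simp
qed

lemma b_antimono: "s \<le> s' \<Longrightarrow> s' \<le> diam \<Longrightarrow> b s' \<le> b s"
  by (induction s' rule: dec_induct) (auto dest: b_Suc_le_and_c_le_Suc(1))

lemma c_mono: "s \<le> s' \<Longrightarrow> s' \<le> diam \<Longrightarrow> c s \<le> c s'"
  by (induction s' rule: dec_induct) (auto dest: b_Suc_le_and_c_le_Suc(2))

text \<open>In the sphere of radius \<open>s\<close> around \<open>u\<close>, the vertices at distance \<open>s + 1\<close> (if
  \<open>s \<le> j\<close>) resp. \<open>s - 1\<close> (if \<open>s > j\<close>) from \<open>v\<close> distinguish \<open>u\<close> and \<open>v\<close>, and by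
  \<open>p_edge_up\<close> and \<open>p_edge_down\<close> they form at least the fraction \<open>\<alpha>\<close> of the sphere.\<close>
lemma distinguishing_number_edge_ge:
  fixes \<alpha> :: real
  assumes uv: "u \<in> V" "v \<in> V" "\<delta> u v = 1" and "j < diam"
    and bj: "\<alpha> * b 0 \<le> b j" and cj: "\<alpha> * b 0 \<le> c (j + 1)"
  shows "\<alpha> * card V \<le> D u v"
proof -
  let ?dist = "\<lambda>s. card {x \<in> V. \<delta> u x = s \<and> \<delta> u x \<noteq> \<delta> v x}"
  have sphere_bound: "\<alpha> * b 0 * p u u s s \<le> real (b 0) * ?dist s" if "s \<le> diam" for s
  proof (cases "s \<le> j")
    case True
    have "p u v s (s + 1) \<le> ?dist s"
      unfolding p_def using finite_V by (intro card_mono) auto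
    moreover have "\<alpha> * b 0 \<le> b s" using bj b_antimono[OF True] \<open>j < diam\<close> by force
    ultimately have "\<alpha> * b 0 * p u u s s \<le> real (b 0) * p u v s (s + 1)"
      using p_edge_up[OF uv, of s] mult_right_mono[of "\<alpha> * b 0" "b s" "p u u s s"]
      by (simp add: mult.commute flip: of_nat_mult)
    also have "\<dots> \<le> real (b 0) * ?dist s" using \<open>p u v s (s + 1) \<le> ?dist s\<close> by (intro mult_left_mono) simp_all
    finally show ?thesis .
  next
    case False
    then obtain r where r: "s = r + 1" by (metis add.commute add_0 le0 less_imp_Suc_add not_le plus_1_eq_Suc)
    have "p u v (r + 1) r \<le> ?dist s"
      unfolding p_def r using finite_V by (intro card_mono) auto
    moreover have "\<alpha> * b 0 \<le> c s" using cj c_mono[of "j + 1" s] False that by force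
    ultimately have "\<alpha> * b 0 * p u u s s \<le> real (b 0) * p u v (r + 1) r"
      using p_edge_down[OF uv, of r] mult_right_mono[of "\<alpha> * b 0" "c s" "p u u s s"] r
      by (simp add: mult.commute flip: of_nat_mult)
    also have "\<dots> \<le> real (b 0) * ?dist s" using \<open>p u v (r + 1) r \<le> ?dist s\<close> by (intro mult_left_mono) simp_all
    finally show ?thesis .
  qed
  have "card V = (\<Sum>s \<le> diam. p u u s s)"
    using card_eq_sum_spheres[OF uv(1), of "\<lambda>_. True"] unfolding p_def by simp
  then have "b 0 * (\<alpha> * card V) = (\<Sum>s \<le> diam. \<alpha> * b 0 * p u u s s)"
    by (simp add: sum_distrib_left algebra_simps)
  also have "\<dots> \<le> (\<Sum>s \<le> diam. real (b 0) * ?dist s)"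
    using sphere_bound by (intro sum_mono) simp
  also have "\<dots> = real (b 0) * D u v"
    using distinguishing_number_eq[OF uv(1,2)]
      card_eq_sum_spheres[OF uv(1), of "\<lambda>x. \<delta> u x \<noteq> \<delta> v x"]
    by (simp add: sum_distrib_left)
  finally show ?thesis using degree_pos \<open>j < diam\<close> by simp
qed

section \<open>Primitivity\<close>

text \<open>Membership in a ball of the distance-\<open>i\<close> graph around \<open>u\<close> depends only on the distance
  from \<open>u\<close>: a last step \<open>y \<rightarrow> w\<close> can be copied to \<open>w'\<close> because
  \<open>p u w (\<delta> u y) i = p u w' (\<delta> u y) i\<close>.\<close>
lemma walk_ball_distance_graph_saturated:
  assumes "u \<in> V"
  shows "w \<in> walk_ball V (distance_graph V E i) u t \<Longrightarrow> w' \<in> V \<Longrightarrow> \<delta> u w' = \<delta> u w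
    \<Longrightarrow> w' \<in> walk_ball V (distance_graph V E i) u t"
proof (induction t arbitrary: w w')
  case 0
  then show ?case using gdist_eq_0_iff[OF assms] gdist_self[OF assms] by simp
next
  case (Suc t)
  let ?B = "walk_ball V (distance_graph V E i) u"
  show ?case
  proof (cases "w \<in> ?B t")
    case True
    then show ?thesis using Suc.IH Suc.prems by simp
  next
    case False
    then obtain y where y: "y \<in> ?B t" "y \<in> V" "w \<in> V" "\<delta> y w = i"
      using Suc.prems(1) unfolding distance_graph_def by auto
    then have "0 < p u w (\<delta> u y) i"
      unfolding p_def using finite_V gdist_commute by (auto simp: card_gt_0_iff)
    also have "p u w (\<delta> u y) i = p u w' (\<delta> u y) i"
      using p_eq_if_gdist_eq[of u w u w'] assms y(3) Suc.prems(2,3) by simp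
    finally obtain y' where y': "y' \<in> V" "\<delta> u y' = \<delta> u y" "\<delta> w' y' = i"
      unfolding p_def by (auto simp: card_gt_0_iff)
    have "y' \<in> ?B t" using Suc.IH[OF y(1) y'(1,2)] .
    moreover have "distance_graph V E i y' w'"
      unfolding distance_graph_def using y' Suc.prems(2) gdist_commute by simp
    ultimately show ?thesis using Suc.prems(2) by auto
  qed
qed

lemma distinguishing_number_walk_ball_le:
  assumes "u \<in> V" "u0 \<in> V" "v0 \<in> V" "\<delta> u0 v0 = i"
  shows "w \<in> walk_ball V (distance_graph V E i) u t \<Longrightarrow> D u w \<le> t * D u0 v0"
proof (induction t arbitrary: w)
  case 0
  then show ?case using distinguishing_number_eq[OF assms(1,1)] by simp
next
  case (Suc t)
  show ?case
  proof (cases "w \<in> walk_ball V (distance_graph V E i) u t")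
    case True
    then show ?thesis using Suc.IH[OF True] by (meson le_trans mult_le_mono1 le_SucI order_refl)
  next
    case False
    then obtain y where y: "y \<in> walk_ball V (distance_graph V E i) u t" "y \<in> V" "w \<in> V" "\<delta> y w = i"
      using Suc.prems unfolding distance_graph_def by auto
    have "D u w \<le> D u y + D y w" using distinguishing_number_triangle assms(1) y(2,3) by blast
    also have "D y w = D u0 v0"
      using distinguishing_number_eq_if_gdist_eq[of y w u0 v0] y assms by simp
    finally show ?thesis using Suc.IH[OF y(1)] by simp
  qed
qed

lemma walk_ball_distance_graph_diameter:
  assumes "primitive V E" "u \<in> V" "1 \<le> i" "i \<le> diam"
  shows "walk_ball V (distance_graph V E i) u diam = V"
proof (rule walk_ball_eq_V_if_saturated[where f = "\<delta> u"])
  show "connected_rel V (distance_graph V E i)"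
    using assms(1,3,4) unfolding primitive_def by blast
  show "\<delta> u ` V \<subseteq> {..diam}" using gdist_le_diameter[OF assms(2)] by auto
qed (use assms(2) walk_ball_distance_graph_saturated in blast)+

lemma neighbour_distinguishing_number_le:
  assumes "primitive V E" "u \<in> V" "v \<in> V" "u \<noteq> v"
  obtains z where "z \<in> V" "\<delta> u z = 1" "D u z \<le> diam * D u v"
proof -
  have i: "1 \<le> \<delta> u v" "\<delta> u v \<le> diam"
    using gdist_eq_0_iff[OF assms(2,3)] assms(4) gdist_le_diameter[OF assms(2,3)] by auto
  then obtain z where z: "z \<in> V" "\<delta> u z = 1" using gdist_intermediate[OF assms(2,3)] by blast
  then have "z \<in> walk_ball V (distance_graph V E (\<delta> u v)) u diam"
    using walk_ball_distance_graph_diameter[OF assms(1,2) i] by simp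
  then show thesis
    using that z distinguishing_number_walk_ball_le[OF assms(2,2,3) refl] by blast
qed

lemma D_min_attained:
  assumes "u \<in> V" "v \<in> V" "u \<noteq> v"
  obtains u' v' where "u' \<in> V" "v' \<in> V" "u' \<noteq> v'" "D_min V E = D u' v'"
proof -
  let ?S = "{D u v | u v. u \<in> V \<and> v \<in> V \<and> u \<noteq> v}"
  have "?S \<subseteq> (\<lambda>(u, v). D u v) ` (V \<times> V)" by auto
  then have "finite ?S" using finite_V by (meson finite_SigmaI finite_imageI finite_subset)
  moreover have "?S \<noteq> {}" using assms by blast
  ultimately have "D_min V E \<in> ?S" unfolding D_min_def by (rule Min_in)
  then show thesis using that by blast
qed

end

theorem proposition4p8:
  fixes V :: "'a set" and E :: "'a \<Rightarrow> 'a \<Rightarrow> bool"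
    and a b c :: "nat \<Rightarrow> nat" and d j :: nat and \<alpha> :: real
  assumes "distance_regular V E a b c"
    and "primitive V E"
    and "diameter V E = d" and "d \<ge> 2"
    and "\<alpha> > 0"
    and "1 \<le> j" and "j \<le> d - 1"
    and "real (b j) \<ge> \<alpha> * real (b 0)"
    and "real (c (j + 1)) \<ge> \<alpha> * real (b 0)"
  shows "real (D_min V E) \<ge> \<alpha> / real d * real (card V)"
proof -
  interpret distance_regular_graph V E a b c by unfold_locales (rule assms(1))
  obtain x y where "x \<in> V" "y \<in> V" "\<delta> x y = 1"
    using gdist_attained[of 1] assms(3,4) by auto
  then obtain u v where uv: "u \<in> V" "v \<in> V" "u \<noteq> v" "D_min V E = D u v"
    using D_min_attained gdist_self by (metis zero_neq_one)
  obtain z where z: "z \<in> V" "\<delta> u z = 1" "D u z \<le> d * D u v"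
    using neighbour_distinguishing_number_le[OF assms(2) uv(1-3)] assms(3) by blast
  have "j < diam" using assms(3,4,7) by simp
  then have "\<alpha> * card V \<le> D u z"
    using distinguishing_number_edge_ge[OF uv(1) z(1,2)] assms(8,9) by simp
  also have "\<dots> \<le> real d * D_min V E" using z(3) uv(4) by (simp flip: of_nat_mult)
  finally show ?thesis using assms(4) by (simp add: field_simps)
qed

end
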